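(* Let $\varepsilon,\beta>0$, let $u_{\varepsilon,\beta,0}\in C^\infty(\mathbb{R})$ satisfy, with $C_0$ independent of $\varepsilon,\beta$, $$\|u_{\varepsilon,\beta,0}\|^2_{L^2}+\|u_{\varepsilon,\beta,0}\|^4_{L^4}+(\beta+\varepsilon^2)\|\partial_x u_{\varepsilon,\beta,0}\|^2_{L^2}\le C_0,\quad (\beta\varepsilon+\beta\varepsilon^2+\beta^2)\|\partial_{xx}^2 u_{\varepsilon,\beta,0}\|^2_{L^2}+(\beta^2\varepsilon^2+\beta^3)\|\partial_{xxx}^3 u_{\varepsilon,\beta,0}\|^2_{L^2}\le C_0,\quad \beta^4\|\partial_{xxxx}^4 u_{\varepsilon,\beta,0}\|^2_{L^2}\le C_0,$$ and let $u_{\varepsilon,\beta}$ be the smooth solution of $$\partial_t u_{\varepsilon,\beta}+\partial_x u_{\varepsilon,\beta}^2+\beta\partial_{xxx}^3u_{\varepsilon,\beta}-\beta\partial_{txx}^3u_{\varepsilon,\beta}+\beta^2\partial_{txxxx}^5u_{\varepsilon,\beta}=\varepsilon\partial_{xx}^2u_{\varepsilon,\beta},\qquad u_{\varepsilon,\beta}(0,\cdot)=u_{\varepsilon,\beta,0}.$$ Then for each $t>0$, $$\|u_{\varepsilon,\beta}(t,\cdot)\|^2_{L^2(\mathbb{R})}+\beta\|\partial_x u_{\varepsilon,\beta}(t,\cdot)\|^2_{L^2(\mathbb{R})}+\beta^2\|\partial_{xx}^2 u_{\varepsilon,\beta}(t,\cdot)\|^2_{L^2(\mathbb{R})}+2\varepsilon\int_0^t\|\partial_x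 u_{\varepsilon,\beta}(s,\cdot)\|^2_{L^2(\mathbb{R})}ds\le C_0,$$ and in particular $$\|u_{\varepsilon,\beta}(t,\cdot)\|_{L^\infty(\mathbb{R})}\le C_0\beta^{-1/4},\qquad \|\partial_x u_{\varepsilon,\beta}(t,\cdot)\|_{L^\infty(\mathbb{R})}\le C_0\beta^{-3/4},$$ where $C_0$ denotes constants depending only on the initial data (not on $\varepsilon,\beta,t$).
   Context: Solutions are smooth and decay, together with their derivatives, as $|x|\to\infty$. *)

theory Defs
  imports "HOL-Analysis.Analysis"
begin

text \<open>Functions u t x of time t and space x. Partial derivatives: in time, one-sided
  at the boundary t = 0 (derivative within the closed half line), in space the usual one.\<close>

datatype pdir = Dt | Dx

definition pdt :: "(real \<Rightarrow> real \<Rightarrow> real) \<Rightarrow> real \<Rightarrow> real \<Rightarrow> real" where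
  "pdt g t x = vector_derivative (\<lambda>s. g s x) (at t within {0..})"

definition pdx :: "(real \<Rightarrow> real \<Rightarrow> real) \<Rightarrow> real \<Rightarrow> real \<Rightarrow> real" where
  "pdx g t x = deriv (\<lambda>y. g t y) x"

fun pD :: "pdir list \<Rightarrow> (real \<Rightarrow> real \<Rightarrow> real) \<Rightarrow> real \<Rightarrow> real \<Rightarrow> real" where
  "pD [] g = g"
| "pD (Dt # ds) g = pdt (pD ds g)"
| "pD (Dx # ds) g = pdx (pD ds g)"

definition smooth_hp :: "(real \<Rightarrow> real \<Rightarrow> real) \<Rightarrow> bool" where
  "smooth_hp u \<longleftrightarrow> (\<forall>ds.
     continuous_on ({0..} \<times> UNIV) (\<lambda>(t, x). pD ds u t x) \<and>
     (\<forall>t\<ge>0. \<forall>x.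
        ((\<lambda>s. pD ds u s x) has_real_derivative pD (Dt # ds) u t x) (at t within {0..}) \<and>
        ((\<lambda>y. pD ds u t y) has_real_derivative pD (Dx # ds) u t x) (at x)))"

definition decays_hp :: "(real \<Rightarrow> real \<Rightarrow> real) \<Rightarrow> bool" where
  "decays_hp u \<longleftrightarrow> (\<forall>ds T. \<exists>g :: real \<Rightarrow> real.
     integrable lborel (\<lambda>x. (g x)^2) \<and> (g \<longlongrightarrow> 0) at_infinity \<and>
     (\<forall>t\<in>{0..T}. \<forall>x. \<bar>pD ds u t x\<bar> \<le> g x))"

definition L2sq :: "(real \<Rightarrow> real) \<Rightarrow> real" where
  "L2sq f = (LINT x|lborel. (f x)^2)"

definition L4pow4 :: "(real \<Rightarrow> real) \<Rightarrow> real" where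
  "L4pow4 f = (LINT x|lborel. (f x)^4)"

end

theory Submission
  imports Defs
begin

text \<open>Multiply the equation by u and integrate in x. After integration by parts, where all
  boundary terms vanish by the decay assumption, the flux term (u^2)_x and the dispersive term
  beta u_xxx contribute nothing, while the two mixed terms become the time derivatives of
  beta ||u_x||^2 / 2 and beta^2 ||u_xx||^2 / 2. Hence the energy
  ||u||^2 + beta ||u_x||^2 + beta^2 ||u_xx||^2 decreases at the rate 2 eps ||u_x||^2, which
  after integration in time gives the first estimate, the initial energy being at most 2 C0.
  The pointwise bounds follow from the interpolation inequality
  f(x)^2 <= ||f||^2 / r + r ||f'||^2 with r = sqrt beta, applied to u and to u_x.\<close>

lemma integrable_mult_if_square_dominated:
  fixes f h g1 g2 :: "real \<Rightarrow> real"
  assumes "f \<in> borel_measurable lborel" "h \<in> borel_measurable lborel"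
    and "\<And>x. \<bar>f x\<bar> \<le> g1 x" "\<And>x. \<bar>h x\<bar> \<le> g2 x"
    and "integrable lborel (\<lambda>x. (g1 x)^2)" "integrable lborel (\<lambda>x. (g2 x)^2)"
  shows "integrable lborel (\<lambda>x. f x * h x)"
proof (rule Bochner_Integration.integrable_bound)
  show "integrable lborel (\<lambda>x. (g1 x)^2 + (g2 x)^2)" using assms by auto
  show "AE x in lborel. norm (f x * h x) \<le> norm ((g1 x)^2 + (g2 x)^2)"
  proof (intro AE_I2)
    fix x
    have "\<bar>f x * h x\<bar> \<le> g1 x * g2 x"
      using assms(3,4) by (simp add: abs_mult mult_mono')
    also have "\<dots> \<le> (g1 x)^2 + (g2 x)^2"
    proof -
      have "0 \<le> g1 x * g2 x" using assms(3,4)[of x] by (meson abs_ge_zero order_trans zero_le_mult_iff)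
      then show ?thesis using sum_squares_bound[of "g1 x" "g2 x"] by (simp add: power2_eq_square)
    qed
    finally show "norm (f x * h x) \<le> norm ((g1 x)^2 + (g2 x)^2)" by simp
  qed
qed (use assms in measurable)

lemma integral_deriv_eq_0_if_vanishing_at_infinity:
  fixes F f :: "real \<Rightarrow> real"
  assumes F: "\<And>x. (F has_real_derivative f x) (at x)" and f: "continuous_on UNIV f"
    and "integrable lborel f" and top: "(F \<longlongrightarrow> 0) at_top" and bot: "(F \<longlongrightarrow> 0) at_bot"
  shows "integral\<^sup>L lborel f = 0"
proof -
  have "(LBINT x=-\<infinity>..\<infinity>. f x) = 0 - 0"
  proof (rule interval_integral_FTC_integrable)
    show "(F has_vector_derivative f x) (at x)" for x
      using F by (simp add: has_real_derivative_iff_has_vector_derivative)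
    show "isCont f x" for x using f by (simp add: continuous_on_eq_continuous_at)
    show "set_integrable lborel (einterval (-\<infinity>) \<infinity>) f"
      using assms by (simp add: set_integrable_def)
    show "((F \<circ> real_of_ereal) \<longlongrightarrow> 0) (at_right (-\<infinity>))"
      unfolding at_right_MInf tendsto_compose_filtermap by (simp add: filtermap_filtermap bot)
    show "((F \<circ> real_of_ereal) \<longlongrightarrow> 0) (at_left \<infinity>)"
      unfolding at_left_PInf tendsto_compose_filtermap by (simp add: filtermap_filtermap top)
  qed simp
  then show ?thesis by (simp add: interval_lebesgue_integral_def set_lebesgue_integral_def)
qed

lemma le_integral_abs_deriv_if_vanishing_at_bot:
  fixes F f :: "real \<Rightarrow> real"
  assumes F: "\<And>x. (F has_real_derivative f x) (at x)" and f: "continuous_on UNIV f"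
    and int: "integrable lborel f" and bot: "(F \<longlongrightarrow> 0) at_bot"
  shows "F x \<le> integral\<^sup>L lborel (\<lambda>y. \<bar>f y\<bar>)"
proof -
  have "(LBINT y=-\<infinity>..ereal x. f y) = F x - 0"
  proof (rule interval_integral_FTC_integrable)
    show "(F has_vector_derivative f y) (at y)" for y
      using F by (simp add: has_real_derivative_iff_has_vector_derivative)
    show "isCont f y" for y using f by (simp add: continuous_on_eq_continuous_at)
    show "set_integrable lborel (einterval (-\<infinity>) (ereal x)) f"
      using integrable_mult_indicator[OF _ int, of "{..<x}"] by (simp add: set_integrable_def)
    show "((F \<circ> real_of_ereal) \<longlongrightarrow> 0) (at_right (-\<infinity>))"
      unfolding at_right_MInf tendsto_compose_filtermap by (simp add: filtermap_filtermap bot)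
    show "((F \<circ> real_of_ereal) \<longlongrightarrow> F x) (at_left (ereal x))"
      unfolding at_left_ereal tendsto_compose_filtermap
      using DERIV_isCont[OF F] by (simp add: filtermap_filtermap isCont_def filterlim_at_split)
  qed simp
  then have "F x = (LINT y|lborel. indicator {..<x} y * f y)"
    by (simp add: interval_lebesgue_integral_def set_lebesgue_integral_def)
  also have "\<dots> \<le> integral\<^sup>L lborel (\<lambda>y. \<bar>f y\<bar>)"
    using integrable_mult_indicator[OF _ int, of "{..<x}"] int
    by (intro integral_mono) (auto simp: indicator_def)
  finally show ?thesis .
qed

lemma integral_by_parts_if_vanishing_at_infinity:
  fixes f f' h h' :: "real \<Rightarrow> real"
  assumes f: "\<And>x. (f has_real_derivative f' x) (at x)" and h: "\<And>x. (h has_real_derivative h' x) (at x)"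
    and "continuous_on UNIV f'" "continuous_on UNIV h'"
    and int1: "integrable lborel (\<lambda>x. f x * h' x)" and int2: "integrable lborel (\<lambda>x. f' x * h x)"
    and "((\<lambda>x. f x * h x) \<longlongrightarrow> 0) at_top" "((\<lambda>x. f x * h x) \<longlongrightarrow> 0) at_bot"
  shows "integral\<^sup>L lborel (\<lambda>x. f x * h' x) = - integral\<^sup>L lborel (\<lambda>x. f' x * h x)"
proof -
  have "integral\<^sup>L lborel (\<lambda>x. f' x * h x + f x * h' x) = 0"
  proof (rule integral_deriv_eq_0_if_vanishing_at_infinity)
    show "((\<lambda>x. f x * h x) has_real_derivative f' x * h x + f x * h' x) (at x)" for x
      using DERIV_mult[OF f h] by (simp add: mult.commute)
    have "continuous_on UNIV f" "continuous_on UNIV h"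
      using f h by (auto intro!: continuous_at_imp_continuous_on DERIV_isCont)
    then show "continuous_on UNIV (\<lambda>x. f' x * h x + f x * h' x)"
      using assms by (intro continuous_intros) auto
  qed (use assms in auto)
  then show ?thesis using int1 int2 by simp
qed

lemma abs_2_mult_le:
  fixes a b r :: real
  assumes "r > 0"
  shows "\<bar>2 * a * b\<bar> \<le> a^2 / r + r * b^2"
proof -
  have "a^2 / r + r * b^2 - \<bar>2 * a * b\<bar> = (\<bar>a\<bar> - r * \<bar>b\<bar>)^2 / r"
    using assms by (simp add: field_simps power2_eq_square abs_mult)
  moreover have "(\<bar>a\<bar> - r * \<bar>b\<bar>)^2 / r \<ge> 0" using assms by simp
  ultimately show ?thesis by linarith
qed

lemma abs_diff_square_le:
  fixes \<phi> \<phi>' :: "real \<Rightarrow> real"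
  assumes "convex S" and \<phi>: "\<And>s. s \<in> S \<Longrightarrow> (\<phi> has_real_derivative \<phi>' s) (at s within S)"
    and "\<And>s. s \<in> S \<Longrightarrow> \<bar>\<phi> s\<bar> \<le> c" "\<And>s. s \<in> S \<Longrightarrow> \<bar>\<phi>' s\<bar> \<le> d" "a \<in> S" "b \<in> S"
  shows "\<bar>(\<phi> a)^2 - (\<phi> b)^2\<bar> \<le> (c^2 + d^2) * \<bar>a - b\<bar>"
proof -
  have "norm ((\<phi> a)^2 - (\<phi> b)^2) \<le> (c^2 + d^2) * norm (a - b)"
  proof (rule field_differentiable_bound[OF \<open>convex S\<close>])
    show "((\<lambda>s. (\<phi> s)^2) has_real_derivative 2 * \<phi> s * \<phi>' s) (at s within S)" if "s \<in> S" for s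
      using DERIV_power[OF \<phi>[OF that], of 2] by (simp add: mult_ac)
    show "norm (2 * \<phi> s * \<phi>' s) \<le> c^2 + d^2" if "s \<in> S" for s
    proof -
      have "(\<phi> s)^2 \<le> c^2" "(\<phi>' s)^2 \<le> d^2"
        using assms(3,4)[OF that] by (meson abs_ge_zero order_trans power2_le_iff_abs_le)+
      then show ?thesis using abs_2_mult_le[of 1 "\<phi> s" "\<phi>' s"] by simp
    qed
  qed (use assms in auto)
  then show ?thesis by simp
qed

lemma has_real_derivative_integral_square:
  fixes f ft :: "real \<Rightarrow> real \<Rightarrow> real"
  assumes deriv: "\<And>s x. s \<ge> 0 \<Longrightarrow> ((\<lambda>s. f s x) has_real_derivative ft s x) (at s within {0..})"
    and meas: "\<And>s. s \<ge> 0 \<Longrightarrow> f s \<in> borel_measurable lborel"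
      "\<And>s. s \<ge> 0 \<Longrightarrow> ft s \<in> borel_measurable lborel"
    and dom: "\<And>T. \<exists>g. integrable lborel (\<lambda>x. (g x)^2) \<and> (\<forall>s\<in>{0..T}. \<forall>x. \<bar>f s x\<bar> \<le> g x)"
    and dom_t: "\<And>T. \<exists>g. integrable lborel (\<lambda>x. (g x)^2) \<and> (\<forall>s\<in>{0..T}. \<forall>x. \<bar>ft s x\<bar> \<le> g x)"
    and "t \<ge> 0"
  shows "((\<lambda>s. LINT x|lborel. (f s x)^2) has_real_derivative
           (LINT x|lborel. 2 * f t x * ft t x)) (at t within {0..})"
  unfolding has_field_derivative_iff tendsto_at_iff_sequentially
proof (intro allI impI)
  fix X :: "nat \<Rightarrow> real" assume X: "\<forall>i. X i \<in> {0..} - {t}" and "X \<longlonglongrightarrow> t"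
  then obtain K where K: "\<And>i. norm (X i) \<le> K"
    using convergent_imp_Bseq convergentI BseqE by metis
  define S where "S = {0..max K t}"
  have XS: "X i \<in> S" and tS: "t \<in> S" for i
    using X K[of i] \<open>t \<ge> 0\<close> by (auto simp: S_def)
  obtain g where g: "integrable lborel (\<lambda>x. (g x)^2)" "\<forall>s\<in>S. \<forall>x. \<bar>f s x\<bar> \<le> g x"
    using dom unfolding S_def by blast
  obtain g' where g': "integrable lborel (\<lambda>x. (g' x)^2)" "\<forall>s\<in>S. \<forall>x. \<bar>ft s x\<bar> \<le> g' x"
    using dom_t unfolding S_def by blast
  have int_sq: "integrable lborel (\<lambda>x. (f s x)^2)" if "s \<in> S" for s
    using integrable_mult_if_square_dominated[of "f s" "f s" g g] meas(1)[of s] g that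
    by (auto simp: S_def power2_eq_square)
  have int_prod: "integrable lborel (\<lambda>x. 2 * f s x * ft s x)" if "s \<in> S" for s
    using integrable_mult_if_square_dominated[of "f s" "ft s" g g'] meas[of s] g g' that
    by (auto simp: S_def mult.assoc)
  have dsq: "((\<lambda>s. (f s x)^2) has_real_derivative 2 * f s x * ft s x) (at s within {0..})"
    if "s \<ge> 0" for s x
    using DERIV_power[OF deriv[OF that, of x], of 2] by (simp add: mult_ac)
  define q where "q i x = ((f (X i) x)^2 - (f t x)^2) / (X i - t)" for i x
  have "(\<lambda>i. LINT x|lborel. q i x) \<longlonglongrightarrow> (LINT x|lborel. 2 * f t x * ft t x)"
  proof (rule integral_dominated_convergence[where w = "\<lambda>x. (g x)^2 + (g' x)^2"])
    show "AE x in lborel. (\<lambda>i. q i x) \<longlonglongrightarrow> 2 * f t x * ft t x"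
    proof (rule AE_I2)
      fix x
      have "((\<lambda>y. ((f y x)^2 - (f t x)^2) / (y - t)) \<longlongrightarrow> 2 * f t x * ft t x) (at t within {0..})"
        using dsq[OF \<open>t \<ge> 0\<close>] unfolding has_field_derivative_iff .
      then show "(\<lambda>i. q i x) \<longlonglongrightarrow> 2 * f t x * ft t x"
        using X \<open>X \<longlonglongrightarrow> t\<close> unfolding q_def tendsto_at_iff_sequentially comp_def by blast
    qed
    show "AE x in lborel. norm (q i x) \<le> (g x)^2 + (g' x)^2" for i
    proof (rule AE_I2)
      fix x
      have "\<bar>(f (X i) x)^2 - (f t x)^2\<bar> \<le> ((g x)^2 + (g' x)^2) * \<bar>X i - t\<bar>"
        using g(2) g'(2) XS tS DERIV_subset[OF deriv]
        by (intro abs_diff_square_le[of S]) (auto simp: S_def)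
      then show "norm (q i x) \<le> (g x)^2 + (g' x)^2"
        using X by (simp add: q_def abs_divide divide_le_eq)
    qed
  qed (use g g' int_sq int_prod XS tS in \<open>auto simp: q_def intro: borel_measurable_integrable\<close>)
  moreover have "(LINT x|lborel. q i x)
      = ((LINT x|lborel. (f (X i) x)^2) - (LINT x|lborel. (f t x)^2)) / (X i - t)" for i
    using int_sq[OF XS] int_sq[OF tS] by (simp add: q_def)
  ultimately show "((\<lambda>y. ((LINT x|lborel. (f y x)^2) - (LINT x|lborel. (f t x)^2)) / (y - t)) \<circ> X)
      \<longlonglongrightarrow> (LINT x|lborel. 2 * f t x * ft t x)"
    by (simp add: comp_def)
qed

lemma set_integral_eq_diff_if_deriv_interior:
  fixes E f :: "real \<Rightarrow> real"
  assumes "a \<le> b" "continuous_on {a..b} E" "continuous_on {a..b} f"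
    and "\<And>s. a < s \<Longrightarrow> s < b \<Longrightarrow> (E has_real_derivative f s) (at s)"
  shows "(LINT s:{a..b}|lborel. f s) = E b - E a"
proof -
  have "(f has_integral (E b - E a)) {a..b}"
    using assms by (intro fundamental_theorem_of_calculus_interior)
      (auto simp: has_real_derivative_iff_has_vector_derivative[symmetric])
  then show ?thesis
    using set_borel_integral_eq_integral(2)[OF borel_integrable_atLeastAtMost'[OF assms(3)]]
    by (simp add: integral_unique)
qed

lemma square_le_L2sq_interpolation:
  fixes f f' :: "real \<Rightarrow> real"
  assumes f: "\<And>x. (f has_real_derivative f' x) (at x)" and cont: "continuous_on UNIV f'"
    and int: "integrable lborel (\<lambda>x. (f x)^2)" and int': "integrable lborel (\<lambda>x. (f' x)^2)"
    and bot: "(f \<longlongrightarrow> 0) at_bot" and "r > 0"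
  shows "(f x)^2 \<le> L2sq f / r + r * L2sq f'"
proof -
  have "continuous_on UNIV f"
    using f by (auto intro!: continuous_at_imp_continuous_on DERIV_isCont)
  then have int_prod: "integrable lborel (\<lambda>y. 2 * f y * f' y)"
    using integrable_mult_if_square_dominated[of f f' "\<lambda>y. \<bar>f y\<bar>" "\<lambda>y. \<bar>f' y\<bar>"] int int' cont
    by (auto simp: mult.assoc borel_measurable_continuous_onI)
  have "(f x)^2 \<le> (LINT y|lborel. \<bar>2 * f y * f' y\<bar>)"
  proof (rule le_integral_abs_deriv_if_vanishing_at_bot[where F = "\<lambda>y. (f y)^2"])
    show "((\<lambda>y. (f y)^2) has_real_derivative 2 * f y * f' y) (at y)" for y
      using DERIV_power[OF f[of y], of 2] by (simp add: mult_ac)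
    show "continuous_on UNIV (\<lambda>y. 2 * f y * f' y)"
      using \<open>continuous_on UNIV f\<close> cont by (intro continuous_intros)
    show "((\<lambda>y. (f y)^2) \<longlongrightarrow> 0) at_bot"
      using tendsto_power[OF bot, of 2] by simp
  qed (rule int_prod)
  also have "\<dots> \<le> (LINT y|lborel. (f y)^2 / r + r * (f' y)^2)"
    using int_prod int int' abs_2_mult_le[OF \<open>r > 0\<close>] by (intro integral_mono) auto
  also have "\<dots> = L2sq f / r + r * L2sq f'"
    using int int' by (simp add: L2sq_def)
  finally show ?thesis .
qed

text \<open>A form of Schwarz's theorem in which only the mixed partial wxt is assumed jointly
  continuous: by the Leibniz rule wt(t, b) - wt(t, a) is the integral of wxt(t, -) over [a, b],
  and differentiating in b gives wtx = wxt.\<close>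

context
  fixes w wx wt wxt :: "real \<Rightarrow> real \<Rightarrow> real"
  assumes wx: "\<And>s y. s \<ge> 0 \<Longrightarrow> ((\<lambda>y. w s y) has_real_derivative wx s y) (at y)"
    and wt: "\<And>s y. s \<ge> 0 \<Longrightarrow> ((\<lambda>s. w s y) has_real_derivative wt s y) (at s within {0..})"
    and wxt: "\<And>s y. s \<ge> 0 \<Longrightarrow> ((\<lambda>s. wx s y) has_real_derivative wxt s y) (at s within {0..})"
    and cont: "continuous_on ({0..} \<times> UNIV) (\<lambda>(s, y). wxt s y)"
begin

lemma diff_time_partial_eq_integral_mixed_partial:
  assumes "t \<ge> 0" "a \<le> b"
  shows "wt t b - wt t a = integral {a..b} (wxt t)"
proof -
  have ftc: "(wx s has_integral (w s b - w s a)) {a..b}" if "s \<ge> 0" for s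
    using \<open>a \<le> b\<close> wx[OF that]
    by (intro fundamental_theorem_of_calculus)
      (auto simp: has_real_derivative_iff_has_vector_derivative[symmetric] intro: DERIV_subset)
  have "((\<lambda>s. integral (cbox a b) (wx s)) has_field_derivative integral (cbox a b) (wxt t))
      (at t within {0..})"
    using ftc \<open>t \<ge> 0\<close>
    by (intro leibniz_rule_field_derivative wxt continuous_on_subset[OF cont])
      (auto simp: convex_real_interval)
  then have "((\<lambda>s. w s b - w s a) has_field_derivative integral {a..b} (wxt t)) (at t within {0..})"
    unfolding cbox_interval
    by (rule has_field_derivative_transform_within[where d = 1])
      (use \<open>t \<ge> 0\<close> ftc in \<open>auto simp: integral_unique\<close>)
  moreover have "((\<lambda>s. w s b - w s a) has_field_derivative wt t b - wt t a) (at t within {0..})"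
    using wt \<open>t \<ge> 0\<close> by (intro DERIV_diff)
  moreover have "t islimpt {0..}"
    using islimpt_subset[of t "{t..t + 1}" "{0..}"] \<open>t \<ge> 0\<close> by simp
  ultimately show ?thesis
    by (intro has_field_derivative_unique) (auto simp: trivial_limit_within)
qed

lemma mixed_partials_commute:
  assumes wtx: "((\<lambda>y. wt t y) has_real_derivative wtx) (at x)" and "t \<ge> 0"
  shows "wtx = wxt t x"
proof -
  define a where "a = x - 1"
  have "((\<lambda>b. wt t b - wt t a) has_real_derivative wtx) (at x)"
    using wtx by (auto intro!: derivative_eq_intros)
  then have "((\<lambda>b. integral {a..b} (wxt t)) has_real_derivative wtx) (at x)"
    by (rule has_field_derivative_transform_within_open[where S = "{a<..}"])
      (auto simp: a_def diff_time_partial_eq_integral_mixed_partial[OF \<open>t \<ge> 0\<close>])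
  moreover have "((\<lambda>b. integral {a..b} (wxt t)) has_real_derivative wxt t x) (at x)"
  proof -
    have "continuous_on UNIV (wxt t)"
    proof -
      have "continuous_on UNIV (\<lambda>y. (t, y))" by (intro continuous_intros)
      then show ?thesis
        using continuous_on_compose2[OF cont, of UNIV "\<lambda>y. (t, y)"] \<open>t \<ge> 0\<close> by auto
    qed
    then have "((\<lambda>b. integral {a..b} (wxt t)) has_real_derivative wxt t x) (at x within {a..x + 1})"
      by (rule integral_has_real_derivative[OF continuous_on_subset]) (auto simp: a_def)
    moreover have "at x within {a..x + 1} = at x"
      by (rule at_within_interior) (simp add: a_def)
    ultimately show ?thesis by simp
  qed
  ultimately show ?thesis by (rule DERIV_unique)
qed

end

lemma smooth_hpD:
  assumes "smooth_hp u"
  shows "continuous_on ({0..} \<times> UNIV) (\<lambda>(t, x). pD ds u t x)"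
    and "t \<ge> 0 \<Longrightarrow> ((\<lambda>s. pD ds u s x) has_real_derivative pD (Dt # ds) u t x) (at t within {0..})"
    and "t \<ge> 0 \<Longrightarrow> ((\<lambda>y. pD ds u t y) has_real_derivative pD (Dx # ds) u t x) (at x)"
  using assms unfolding smooth_hp_def by blast+

lemma continuous_on_pD_space:
  assumes "smooth_hp u" "t \<ge> 0"
  shows "continuous_on UNIV (pD ds u t)"
  using smooth_hpD(3)[OF assms] by (auto intro!: continuous_at_imp_continuous_on DERIV_isCont)

lemma borel_measurable_pD_space:
  assumes "smooth_hp u" "t \<ge> 0"
  shows "pD ds u t \<in> borel_measurable lborel"
  using continuous_on_pD_space[OF assms] by (simp add: borel_measurable_continuous_onI)

lemma pD_Dt_Dx_commute:
  assumes "smooth_hp u" "t \<ge> 0"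
  shows "pD (Dt # Dx # ds) u t x = pD (Dx # Dt # ds) u t x"
  using mixed_partials_commute[where w = "pD ds u" and wx = "pD (Dx # ds) u"
      and wt = "pD (Dt # ds) u" and wxt = "pD (Dt # Dx # ds) u", OF smooth_hpD(3,2,2,1)[OF assms(1)]
      smooth_hpD(3)[OF assms] assms(2)]
  by simp

lemma pD_tendsto_0:
  assumes "decays_hp u" "t \<ge> 0"
  shows "(pD ds u t \<longlongrightarrow> 0) at_top" and "(pD ds u t \<longlongrightarrow> 0) at_bot"
proof -
  obtain g where g0: "(g \<longlongrightarrow> 0) at_infinity" and g: "\<forall>s\<in>{0..t}. \<forall>x. \<bar>pD ds u s x\<bar> \<le> g x"
    using assms(1) unfolding decays_hp_def by blast
  have "(pD ds u t \<longlongrightarrow> 0) at_infinity"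
    by (rule Lim_null_comparison[OF always_eventually g0]) (use g assms(2) in simp)
  then show "(pD ds u t \<longlongrightarrow> 0) at_top" "(pD ds u t \<longlongrightarrow> 0) at_bot"
    by (auto intro: filterlim_mono at_top_le_at_infinity at_bot_le_at_infinity)
qed

lemma integrable_pD_mult:
  assumes "smooth_hp u" "decays_hp u" "t \<ge> 0"
  shows "integrable lborel (\<lambda>x. pD a u t x * pD b u t x)"
proof -
  obtain g1 where "integrable lborel (\<lambda>x. (g1 x)^2)" "\<forall>s\<in>{0..t}. \<forall>x. \<bar>pD a u s x\<bar> \<le> g1 x"
    using assms(2) unfolding decays_hp_def by blast
  moreover obtain g2 where "integrable lborel (\<lambda>x. (g2 x)^2)" "\<forall>s\<in>{0..t}. \<forall>x. \<bar>pD b u s x\<bar> \<le> g2 x"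
    using assms(2) unfolding decays_hp_def by blast
  ultimately show ?thesis
    using borel_measurable_pD_space[OF assms(1,3)] assms(3)
    by (intro integrable_mult_if_square_dominated[of _ _ g1 g2]) auto
qed

lemma integrable_pD_square:
  assumes "smooth_hp u" "decays_hp u" "t \<ge> 0"
  shows "integrable lborel (\<lambda>x. (pD a u t x)^2)"
  using integrable_pD_mult[OF assms, of a a] by (simp add: power2_eq_square)

lemma integral_pD_by_parts:
  assumes "smooth_hp u" "decays_hp u" "t \<ge> 0"
  shows "(LINT x|lborel. pD a u t x * pD (Dx # b) u t x)
    = - (LINT x|lborel. pD (Dx # a) u t x * pD b u t x)"
proof (rule integral_by_parts_if_vanishing_at_infinity)
  show "((\<lambda>x. pD a u t x * pD b u t x) \<longlongrightarrow> 0) at_top" "((\<lambda>x. pD a u t x * pD b u t x) \<longlongrightarrow> 0) at_bot"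
    using assms(2,3) by (auto intro: tendsto_mult_zero pD_tendsto_0)
qed (fact smooth_hpD(3)[OF assms(1,3)] continuous_on_pD_space[OF assms(1,3)]
    integrable_pD_mult[OF assms])+

lemma integral_pD_mult_Dx_self:
  assumes "smooth_hp u" "decays_hp u" "t \<ge> 0"
  shows "(LINT x|lborel. pD a u t x * pD (Dx # a) u t x) = 0"
  using integral_pD_by_parts[OF assms, of a a] by (simp add: mult.commute)

lemma integral_pD_by_parts_Dt:
  assumes "smooth_hp u" "decays_hp u" "t \<ge> 0"
  shows "(LINT x|lborel. pD a u t x * pD (Dt # Dx # b) u t x)
    = - (LINT x|lborel. pD (Dx # a) u t x * pD (Dt # b) u t x)"
  using integral_pD_by_parts[OF assms, of a "Dt # b"] pD_Dt_Dx_commute[OF assms(1,3)] by simp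

lemma pD_square_le_L2sq:
  assumes "smooth_hp u" "decays_hp u" "t \<ge> 0" "r > 0"
  shows "(pD a u t x)^2 \<le> L2sq (pD a u t) / r + r * L2sq (pD (Dx # a) u t)"
  using assms
  by (intro square_le_L2sq_interpolation smooth_hpD(3) continuous_on_pD_space
      integrable_pD_square pD_tendsto_0(2))

lemma pdx_square:
  assumes "smooth_hp u" "t \<ge> 0"
  shows "pdx (\<lambda>s y. (u s y)^2) t x = 2 * u t x * pdx u t x"
proof -
  have "((\<lambda>y. (u t y)^2) has_real_derivative 2 * u t x * pdx u t x) (at x)"
    using DERIV_power[OF smooth_hpD(3)[OF assms, of "[]" x], of 2] by (simp add: mult_ac)
  then show ?thesis
    unfolding pdx_def[of "\<lambda>s y. (u s y)^2"] by (rule DERIV_imp_deriv)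
qed

lemma integral_square_mult_pdx:
  assumes "smooth_hp u" "decays_hp u" "t \<ge> 0"
  shows "integrable lborel (\<lambda>x. (u t x)^2 * pdx u t x)"
    and "(LINT x|lborel. (u t x)^2 * pdx u t x) = 0"
proof -
  have u': "((\<lambda>y. u t y) has_real_derivative pdx u t x) (at x)" for x
    using smooth_hpD(3)[OF assms(1,3), of "[]"] by simp
  have cont: "continuous_on UNIV (u t)" "continuous_on UNIV (pdx u t)"
    using continuous_on_pD_space[OF assms(1,3), of "[]"] continuous_on_pD_space[OF assms(1,3), of "[Dx]"]
    by simp_all
  define K where "K = L2sq (u t) + L2sq (pdx u t)"
  have "(u t x)^2 \<le> K" for x
    using pD_square_le_L2sq[OF assms, of 1 "[]" x] by (simp add: K_def)
  then have bound: "\<bar>u t x\<bar> \<le> sqrt K" for x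
    using real_sqrt_le_mono by fastforce
  show int: "integrable lborel (\<lambda>x. (u t x)^2 * pdx u t x)"
  proof (rule Bochner_Integration.integrable_bound)
    show "integrable lborel (\<lambda>x. sqrt K * (u t x * pdx u t x))"
      using integrable_pD_mult[OF assms, of "[]" "[Dx]"] by simp
    show "AE x in lborel. norm ((u t x)^2 * pdx u t x) \<le> norm (sqrt K * (u t x * pdx u t x))"
    proof (intro AE_I2)
      fix x
      have "\<bar>(u t x)^2 * pdx u t x\<bar> = \<bar>u t x\<bar> * \<bar>u t x * pdx u t x\<bar>"
        by (simp add: abs_mult power2_eq_square)
      also have "\<dots> \<le> sqrt K * \<bar>u t x * pdx u t x\<bar>"
        by (rule mult_right_mono[OF bound]) simp
      finally show "norm ((u t x)^2 * pdx u t x) \<le> norm (sqrt K * (u t x * pdx u t x))"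
        using order_trans[OF abs_ge_zero bound] by (simp add: abs_mult)
    qed
  qed (use cont in \<open>auto intro!: borel_measurable_continuous_onI continuous_intros\<close>)
  show "(LINT x|lborel. (u t x)^2 * pdx u t x) = 0"
  proof (rule integral_deriv_eq_0_if_vanishing_at_infinity[where F = "\<lambda>x. (u t x)^3 / 3"])
    show "((\<lambda>x. (u t x)^3 / 3) has_real_derivative (u t x)^2 * pdx u t x) (at x)" for x
      using DERIV_power[OF u'[of x], of 3] by (auto intro: derivative_eq_intros simp: mult_ac)
    show "((\<lambda>x. (u t x)^3 / 3) \<longlongrightarrow> 0) at_top" "((\<lambda>x. (u t x)^3 / 3) \<longlongrightarrow> 0) at_bot"
      using pD_tendsto_0[OF assms(2,3), of "[]"]
      by (auto intro!: tendsto_eq_intros)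
  qed (use cont int in \<open>auto intro!: continuous_intros\<close>)
qed

lemma has_real_derivative_L2sq_pD:
  assumes "smooth_hp u" "decays_hp u" "t \<ge> 0"
  shows "((\<lambda>s. L2sq (pD a u s)) has_real_derivative
    2 * (LINT x|lborel. pD a u t x * pD (Dt # a) u t x)) (at t within {0..})"
proof -
  have dom: "\<exists>g. integrable lborel (\<lambda>x. (g x)^2) \<and> (\<forall>s\<in>{0..T}. \<forall>x. \<bar>pD ds u s x\<bar> \<le> g x)"
    for ds T
    using assms(2) unfolding decays_hp_def by blast
  have "((\<lambda>s. LINT x|lborel. (pD a u s x)^2) has_real_derivative
      (LINT x|lborel. 2 * pD a u t x * pD (Dt # a) u t x)) (at t within {0..})"
    by (rule has_real_derivative_integral_square[OF smooth_hpD(2)[OF assms(1)]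
          borel_measurable_pD_space[OF assms(1)] borel_measurable_pD_space[OF assms(1)] dom dom assms(3)])
  then show ?thesis by (simp add: L2sq_def mult.assoc)
qed

definition solves_pde_at :: "real \<Rightarrow> real \<Rightarrow> (real \<Rightarrow> real \<Rightarrow> real) \<Rightarrow> real \<Rightarrow> bool" where
  "solves_pde_at \<epsilon> \<beta> u t \<longleftrightarrow> (\<forall>x.
     pdt u t x + pdx (\<lambda>s y. (u s y)^2) t x + \<beta> * pD [Dx, Dx, Dx] u t x
     - \<beta> * pD [Dt, Dx, Dx] u t x + \<beta>^2 * pD [Dt, Dx, Dx, Dx, Dx] u t x
     = \<epsilon> * pD [Dx, Dx] u t x)"

definition energy :: "real \<Rightarrow> (real \<Rightarrow> real \<Rightarrow> real) \<Rightarrow> real \<Rightarrow> real" where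
  "energy \<beta> u t = L2sq (u t) + \<beta> * L2sq (pdx u t) + \<beta>^2 * L2sq (pD [Dx, Dx] u t)"

lemma energy_identity:
  assumes "smooth_hp u" "decays_hp u" "t \<ge> 0"
    and pde: "solves_pde_at \<epsilon> \<beta> u t"
  shows "(LINT x|lborel. u t x * pdt u t x)
      + \<beta> * (LINT x|lborel. pdx u t x * pdt (pdx u) t x)
      + \<beta>^2 * (LINT x|lborel. pdx (pdx u) t x * pdt (pdx (pdx u)) t x)
    = - \<epsilon> * L2sq (pdx u t)"
proof -
  define P where "P a b = (LINT x|lborel. pD a u t x * pD b u t x)" for a b
  have "pD [] u t x * pD [Dt] u t x = \<epsilon> * (pD [] u t x * pD [Dx, Dx] u t x)
      - 2 * ((u t x)^2 * pdx u t x) - \<beta> * (pD [] u t x * pD [Dx, Dx, Dx] u t x)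
      + \<beta> * (pD [] u t x * pD [Dt, Dx, Dx] u t x)
      - \<beta>^2 * (pD [] u t x * pD [Dt, Dx, Dx, Dx, Dx] u t x)" for x
  proof -
    have pde_x: "pD [Dt] u t x = \<epsilon> * pD [Dx, Dx] u t x - 2 * u t x * pdx u t x - \<beta> * pD [Dx, Dx, Dx] u t x
        + \<beta> * pD [Dt, Dx, Dx] u t x - \<beta>^2 * pD [Dt, Dx, Dx, Dx, Dx] u t x"
      using pde unfolding solves_pde_at_def pdx_square[OF assms(1,3)] by (simp add: algebra_simps)
    show ?thesis by (simp only: pde_x) (simp add: algebra_simps power2_eq_square)
  qed
  then have "P [] [Dt] = \<epsilon> * P [] [Dx, Dx] - 2 * (LINT x|lborel. (u t x)^2 * pdx u t x)
      - \<beta> * P [] [Dx, Dx, Dx] + \<beta> * P [] [Dt, Dx, Dx] - \<beta>^2 * P [] [Dt, Dx, Dx, Dx, Dx]"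
    unfolding P_def
    using integrable_pD_mult[OF assms(1-3)] integral_square_mult_pdx(1)[OF assms(1-3)]
    by (simp del: pD.simps)
  moreover have "P [] [Dx, Dx] = - P [Dx] [Dx]"
    unfolding P_def by (rule integral_pD_by_parts[OF assms(1-3)])
  moreover have "P [] [Dx, Dx, Dx] = 0"
    using integral_pD_by_parts[OF assms(1-3), of "[]" "[Dx, Dx]"]
      integral_pD_mult_Dx_self[OF assms(1-3), of "[Dx]"]
    unfolding P_def by simp
  moreover have "P [] [Dt, Dx, Dx] = - P [Dx] [Dt, Dx]"
    unfolding P_def by (rule integral_pD_by_parts_Dt[OF assms(1-3)])
  moreover have "P [] [Dt, Dx, Dx, Dx, Dx] = P [Dx, Dx] [Dt, Dx, Dx]"
    using integral_pD_by_parts_Dt[OF assms(1-3), of "[]" "[Dx, Dx, Dx]"]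
      integral_pD_by_parts_Dt[OF assms(1-3), of "[Dx]" "[Dx, Dx]"]
    unfolding P_def by simp
  ultimately show ?thesis
    using integral_square_mult_pdx(2)[OF assms(1-3)]
    by (simp add: P_def L2sq_def power2_eq_square algebra_simps)
qed

lemma has_real_derivative_energy:
  assumes "smooth_hp u" "decays_hp u" "t \<ge> 0"
    and pde: "solves_pde_at \<epsilon> \<beta> u t"
  shows "(energy \<beta> u has_real_derivative - 2 * \<epsilon> * L2sq (pdx u t)) (at t within {0..})"
proof -
  define I where "I a = (LINT x|lborel. pD a u t x * pD (Dt # a) u t x)" for a
  have "(energy \<beta> u has_real_derivative 2 * I [] + \<beta> * (2 * I [Dx]) + \<beta>^2 * (2 * I [Dx, Dx]))
      (at t within {0..})"
    using has_real_derivative_L2sq_pD[OF assms(1-3), of "[]"]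
      has_real_derivative_L2sq_pD[OF assms(1-3), of "[Dx]"]
      has_real_derivative_L2sq_pD[OF assms(1-3), of "[Dx, Dx]"]
    unfolding energy_def[abs_def] I_def by (auto intro!: DERIV_add DERIV_cmult)
  then have "(energy \<beta> u has_real_derivative 2 * (I [] + \<beta> * I [Dx] + \<beta>^2 * I [Dx, Dx]))
      (at t within {0..})"
    by (rule DERIV_cong) (simp add: algebra_simps)
  moreover have "I [] + \<beta> * I [Dx] + \<beta>^2 * I [Dx, Dx] = - \<epsilon> * L2sq (pdx u t)"
    using energy_identity[OF assms] by (simp add: I_def)
  ultimately show ?thesis by (simp add: mult.assoc)
qed

lemma L2sq_nonneg: "L2sq f \<ge> 0"
  unfolding L2sq_def by (rule integral_nonneg_AE) auto

lemma L4pow4_nonneg: "L4pow4 f \<ge> 0"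
  unfolding L4pow4_def by (rule integral_nonneg_AE) auto

lemma energy_leD:
  assumes "energy \<beta> u t \<le> M" "\<beta> \<ge> 0"
  shows "L2sq (u t) \<le> M" "\<beta> * L2sq (pdx u t) \<le> M" "\<beta>^2 * L2sq (pD [Dx, Dx] u t) \<le> M"
proof -
  have "0 \<le> \<beta> * L2sq (pdx u t)" "0 \<le> \<beta>^2 * L2sq (pD [Dx, Dx] u t)"
    using assms(2) L2sq_nonneg by simp_all
  then show "L2sq (u t) \<le> M" "\<beta> * L2sq (pdx u t) \<le> M" "\<beta>^2 * L2sq (pD [Dx, Dx] u t) \<le> M"
    using assms(1) L2sq_nonneg[of "u t"] unfolding energy_def by linarith+
qed

lemma energy_balance:
  assumes "smooth_hp u" "decays_hp u" "t \<ge> 0"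
    and pde: "\<forall>t>0. solves_pde_at \<epsilon> \<beta> u t"
  shows "set_integrable lborel {0..t} (\<lambda>s. L2sq (pdx u s))"
    and "energy \<beta> u t + 2 * \<epsilon> * (LINT s:{0..t}|lborel. L2sq (pdx u s)) = energy \<beta> u 0"
proof -
  have L2sq_cont: "continuous_on {0..t} (\<lambda>s. L2sq (pD a u s))" for a
    by (rule DERIV_continuous_on, rule DERIV_subset[OF has_real_derivative_L2sq_pD[OF assms(1,2)]])
      auto
  then show si: "set_integrable lborel {0..t} (\<lambda>s. L2sq (pdx u s))"
    using borel_integrable_atLeastAtMost'[OF L2sq_cont[of "[Dx]"]] by simp
  have "(LINT s:{0..t}|lborel. - 2 * \<epsilon> * L2sq (pdx u s)) = energy \<beta> u t - energy \<beta> u 0"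
  proof (rule set_integral_eq_diff_if_deriv_interior)
    show "continuous_on {0..t} (energy \<beta> u)"
      using L2sq_cont[of "[]"] L2sq_cont[of "[Dx]"] L2sq_cont[of "[Dx, Dx]"]
      unfolding energy_def[abs_def] by (auto intro!: continuous_intros)
    show "continuous_on {0..t} (\<lambda>s. - 2 * \<epsilon> * L2sq (pdx u s))"
      using L2sq_cont[of "[Dx]"] by (auto intro!: continuous_intros)
    show "(energy \<beta> u has_real_derivative - 2 * \<epsilon> * L2sq (pdx u s)) (at s)" if "0 < s" "s < t" for s
    proof -
      have "at s within {0..} = at s"
        by (rule at_within_interior) (use that in simp)
      then show ?thesis
        using has_real_derivative_energy[OF assms(1,2) _ pde[rule_format, OF that(1)]] that by simp
    qed
  qed (use assms(3) in simp)
  moreover have "(LINT s:{0..t}|lborel. - 2 * \<epsilon> * L2sq (pdx u s))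
      = - 2 * \<epsilon> * (LINT s:{0..t}|lborel. L2sq (pdx u s))"
    by (rule set_integral_mult_right)
  ultimately show "energy \<beta> u t + 2 * \<epsilon> * (LINT s:{0..t}|lborel. L2sq (pdx u s)) = energy \<beta> u 0"
    by linarith
qed

lemma energy_initial_le:
  assumes "\<epsilon> > 0" "\<beta> > 0"
    and "L2sq u0 + L4pow4 u0 + (\<beta> + \<epsilon>^2) * L2sq (deriv u0) \<le> C0"
    and "(\<beta>*\<epsilon> + \<beta>*\<epsilon>^2 + \<beta>^2) * L2sq ((deriv ^^ 2) u0)
      + (\<beta>^2*\<epsilon>^2 + \<beta>^3) * L2sq ((deriv ^^ 3) u0) \<le> C0"
    and "\<forall>x. u 0 x = u0 x"
  shows "energy \<beta> u 0 \<le> 2 * C0"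
proof -
  have "u 0 = u0" using assms(5) by auto
  then have "pdx u 0 = deriv u0" "pD [Dx, Dx] u 0 = (deriv ^^ 2) u0"
    by (auto simp: pdx_def numeral_2_eq_2 fun_eq_iff)
  then have "energy \<beta> u 0 = L2sq u0 + \<beta> * L2sq (deriv u0) + \<beta>^2 * L2sq ((deriv ^^ 2) u0)"
    unfolding energy_def using \<open>u 0 = u0\<close> by simp
  moreover have "0 \<le> \<epsilon>^2 * L2sq (deriv u0)" "0 \<le> (\<beta>*\<epsilon> + \<beta>*\<epsilon>^2) * L2sq ((deriv ^^ 2) u0)"
    "0 \<le> (\<beta>^2*\<epsilon>^2 + \<beta>^3) * L2sq ((deriv ^^ 3) u0)"
    using assms(1,2) L2sq_nonneg by simp_all
  moreover have "(\<beta> + \<epsilon>^2) * L2sq (deriv u0) = \<beta> * L2sq (deriv u0) + \<epsilon>^2 * L2sq (deriv u0)"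
    "(\<beta>*\<epsilon> + \<beta>*\<epsilon>^2 + \<beta>^2) * L2sq ((deriv ^^ 2) u0)
      = (\<beta>*\<epsilon> + \<beta>*\<epsilon>^2) * L2sq ((deriv ^^ 2) u0) + \<beta>^2 * L2sq ((deriv ^^ 2) u0)"
    by (simp_all add: distrib_right)
  ultimately show ?thesis
    using assms(3,4) L4pow4_nonneg[of u0] by linarith
qed

lemma abs_le_powr_if_interpolation:
  fixes y A B M C \<beta> k :: real
  assumes y: "y^2 \<le> A / sqrt \<beta> + sqrt \<beta> * B"
    and A: "\<beta> powr k * A \<le> M" and B: "\<beta> powr (k + 1) * B \<le> M"
    and C: "2 * M \<le> C^2" "0 \<le> C" and "\<beta> > 0"
  shows "\<bar>y\<bar> \<le> C * \<beta> powr (- (2 * k + 1) / 4)"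
proof -
  define p where "p = \<beta> powr (- (2 * k + 1) / 4)"
  have "p^2 = \<beta> powr (2 * (- (2 * k + 1) / 4))"
    using \<open>\<beta> > 0\<close> by (simp add: p_def powr_power)
  also have "2 * (- (2 * k + 1) / 4) = - k - 1/2" by (simp add: field_simps)
  finally have p: "p^2 = \<beta> powr (- k - 1/2)" "p \<ge> 0" by (simp_all add: p_def)
  have "p^2 * \<beta> powr k = \<beta> powr (- k - 1/2 + k)"
    unfolding p(1) by (rule powr_add[symmetric])
  also have "\<dots> = inverse (sqrt \<beta>)"
    using \<open>\<beta> > 0\<close> by (simp add: powr_minus powr_half_sqrt)
  finally have A_eq: "A / sqrt \<beta> = p^2 * (\<beta> powr k * A)"
    by (simp only: mult.assoc[symmetric] divide_inverse mult.commute[of A])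
  have "p^2 * \<beta> powr (k + 1) = \<beta> powr (- k - 1/2 + (k + 1))"
    unfolding p(1) by (rule powr_add[symmetric])
  also have "\<dots> = sqrt \<beta>"
    using \<open>\<beta> > 0\<close> by (simp add: powr_half_sqrt)
  finally have B_eq: "sqrt \<beta> * B = p^2 * (\<beta> powr (k + 1) * B)"
    by (simp only: mult.assoc[symmetric])
  have "y^2 \<le> p^2 * (\<beta> powr k * A) + p^2 * (\<beta> powr (k + 1) * B)"
    using y unfolding A_eq B_eq .
  also have "\<dots> \<le> p^2 * M + p^2 * M"
    using A B by (intro add_mono mult_left_mono) simp_all
  also have "\<dots> = p^2 * (2 * M)" by simp
  also have "\<dots> \<le> C^2 * p^2"
    using mult_right_mono[OF C(1) zero_le_power2[of p]] by (simp add: ac_simps)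
  also have "\<dots> = (C * p)^2" by (simp add: power_mult_distrib)
  finally have "\<bar>y\<bar> \<le> C * p"
    using p(2) C(2) by (simp add: abs_le_square_iff[symmetric])
  then show ?thesis unfolding p_def .
qed

lemma energy_le_energy_0:
  assumes "smooth_hp u" "decays_hp u" "t \<ge> 0" "\<epsilon> \<ge> 0"
    and pde: "\<forall>t>0. solves_pde_at \<epsilon> \<beta> u t"
  shows "energy \<beta> u t \<le> energy \<beta> u 0"
proof -
  have "0 \<le> (LINT s:{0..t}|lborel. L2sq (pdx u s))"
    unfolding set_lebesgue_integral_def by (intro integral_nonneg_AE AE_I2) (simp add: L2sq_nonneg)
  then have "0 \<le> 2 * \<epsilon> * (LINT s:{0..t}|lborel. L2sq (pdx u s))"
    using \<open>\<epsilon> \<ge> 0\<close> by simp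
  then show ?thesis
    using energy_balance(2)[OF assms(1-3) pde] by linarith
qed

lemma abs_le_powr_if_energy_le:
  assumes u: "smooth_hp u" "decays_hp u" "t \<ge> 0" and "\<beta> > 0"
    and E: "energy \<beta> u t \<le> M" and C: "2 * M \<le> C^2" "0 \<le> C"
  shows "\<bar>u t x\<bar> \<le> C * \<beta> powr (-1/4)" and "\<bar>pdx u t x\<bar> \<le> C * \<beta> powr (-3/4)"
proof -
  have r: "sqrt \<beta> > 0" using \<open>\<beta> > 0\<close> by simp
  show "\<bar>u t x\<bar> \<le> C * \<beta> powr (-1/4)"
    using abs_le_powr_if_interpolation[where k = 0, OF _ _ _ C \<open>\<beta> > 0\<close>]
      pD_square_le_L2sq[OF u r, of "[]" x] energy_leD[OF E] \<open>\<beta> > 0\<close>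
    by simp
  show "\<bar>pdx u t x\<bar> \<le> C * \<beta> powr (-3/4)"
    using abs_le_powr_if_interpolation[where k = 1, OF _ _ _ C \<open>\<beta> > 0\<close>]
      pD_square_le_L2sq[OF u r, of "[Dx]" x] energy_leD[OF E] \<open>\<beta> > 0\<close>
    by (simp add: power2_eq_square)
qed

theorem lemma2p1:
  fixes C0 :: real
  shows "\<exists>C :: real. \<forall>(\<epsilon>::real) (\<beta>::real) (u0 :: real \<Rightarrow> real) (u :: real \<Rightarrow> real \<Rightarrow> real).
    \<epsilon> > 0 \<longrightarrow> \<beta> > 0 \<longrightarrow>
    L2sq u0 + L4pow4 u0 + (\<beta> + \<epsilon>^2) * L2sq (deriv u0) \<le> C0 \<longrightarrow>
    (\<beta>*\<epsilon> + \<beta>*\<epsilon>^2 + \<beta>^2) * L2sq ((deriv ^^ 2) u0)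
      + (\<beta>^2*\<epsilon>^2 + \<beta>^3) * L2sq ((deriv ^^ 3) u0) \<le> C0 \<longrightarrow>
    \<beta>^4 * L2sq ((deriv ^^ 4) u0) \<le> C0 \<longrightarrow>
    smooth_hp u \<longrightarrow> decays_hp u \<longrightarrow>
    (\<forall>x. u 0 x = u0 x) \<longrightarrow>
    (\<forall>t>0. \<forall>x.
       pdt u t x + pdx (\<lambda>s y. (u s y)^2) t x + \<beta> * pD [Dx, Dx, Dx] u t x
       - \<beta> * pD [Dt, Dx, Dx] u t x + \<beta>^2 * pD [Dt, Dx, Dx, Dx, Dx] u t x
       = \<epsilon> * pD [Dx, Dx] u t x) \<longrightarrow>
    (\<forall>t>0.
       set_integrable lborel {0..t} (\<lambda>s. L2sq (pdx u s)) \<and>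
       L2sq (u t) + \<beta> * L2sq (pdx u t) + \<beta>^2 * L2sq (pD [Dx, Dx] u t)
         + 2 * \<epsilon> * (LINT s:{0..t}|lborel. L2sq (pdx u s)) \<le> C \<and>
       (\<forall>x. \<bar>u t x\<bar> \<le> C * \<beta> powr (-1/4)) \<and>
       (\<forall>x. \<bar>pdx u t x\<bar> \<le> C * \<beta> powr (-3/4)))"
proof (intro exI[of _ "2 * \<bar>C0\<bar> + 2 * sqrt \<bar>C0\<bar>"] allI impI conjI)
  fix \<epsilon> \<beta> :: real and u0 :: "real \<Rightarrow> real" and u :: "real \<Rightarrow> real \<Rightarrow> real" and t x :: real
  assume "\<epsilon> > 0" "\<beta> > 0"
    and data: "L2sq u0 + L4pow4 u0 + (\<beta> + \<epsilon>^2) * L2sq (deriv u0) \<le> C0"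
      "(\<beta>*\<epsilon> + \<beta>*\<epsilon>^2 + \<beta>^2) * L2sq ((deriv ^^ 2) u0)
        + (\<beta>^2*\<epsilon>^2 + \<beta>^3) * L2sq ((deriv ^^ 3) u0) \<le> C0"
    and u: "smooth_hp u" "decays_hp u" and init: "\<forall>x. u 0 x = u0 x"
    and pde: "\<forall>t>0. \<forall>x.
       pdt u t x + pdx (\<lambda>s y. (u s y)^2) t x + \<beta> * pD [Dx, Dx, Dx] u t x
       - \<beta> * pD [Dt, Dx, Dx] u t x + \<beta>^2 * pD [Dt, Dx, Dx, Dx, Dx] u t x
       = \<epsilon> * pD [Dx, Dx] u t x"
    and "t > 0"
  let ?C = "2 * \<bar>C0\<bar> + 2 * sqrt \<bar>C0\<bar>"
  have t: "t \<ge> 0" using \<open>t > 0\<close> by simp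
  from pde have pde: "\<forall>t>0. solves_pde_at \<epsilon> \<beta> u t" by (simp add: solves_pde_at_def)
  have E0: "energy \<beta> u 0 \<le> 2 * C0"
    by (rule energy_initial_le[of \<epsilon> \<beta> u0 C0 u, OF \<open>\<epsilon> > 0\<close> \<open>\<beta> > 0\<close> data init])
  then have "C0 \<ge> 0"
    using energy_leD(1)[OF E0] L2sq_nonneg[of "u 0"] \<open>\<beta> > 0\<close> by linarith
  have Et: "energy \<beta> u t \<le> 2 * C0"
    using energy_le_energy_0[OF u t _ pde] \<open>\<epsilon> > 0\<close> E0 by simp
  have C: "2 * (2 * C0) \<le> ?C^2" "0 \<le> ?C"
  proof -
    have "2 * (2 * C0) = (2 * sqrt \<bar>C0\<bar>)^2"
      using \<open>C0 \<ge> 0\<close> by (simp add: power_mult_distrib)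
    also have "\<dots> \<le> ?C^2" by (rule power_mono) auto
    finally show "2 * (2 * C0) \<le> ?C^2" .
  qed simp
  show "set_integrable lborel {0..t} (\<lambda>s. L2sq (pdx u s))"
    by (rule energy_balance(1)[OF u t pde])
  show "L2sq (u t) + \<beta> * L2sq (pdx u t) + \<beta>^2 * L2sq (pD [Dx, Dx] u t)
      + 2 * \<epsilon> * (LINT s:{0..t}|lborel. L2sq (pdx u s)) \<le> ?C"
    using energy_balance(2)[OF u t pde] E0 \<open>C0 \<ge> 0\<close> real_sqrt_ge_zero[of "\<bar>C0\<bar>"]
    unfolding energy_def by linarith
  show "\<bar>u t x\<bar> \<le> ?C * \<beta> powr (-1/4)" "\<bar>pdx u t x\<bar> \<le> ?C * \<beta> powr (-3/4)"
    by (rule abs_le_powr_if_energy_le[OF u t \<open>\<beta> > 0\<close> Et C])+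
qed

end
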